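(* Let $\omega$ be a nonempty word in $\mathcal{B}$, let $n\ge1$, and let $\pi\in X_n(\omega)$ have $\omega$-decomposition $(\alpha,\omega,\gamma,\delta)$. If $\delta\notin\mathcal{B}$, then $\gamma_{-1}>\delta_1$ and $h(\omega)\ne 1$.
   Context: For a word $w=w_1\cdots w_k$ of pairwise distinct positive integers, an ascent is an index $t$ with $w_t<w_{t+1}$, a descent one with $w_t>w_{t+1}$, and the height is $h(w)=(\#\text{ascents})-(\#\text{descents})$ ($h(w)=0$ if $k\le1$). The word is ballot if every prefix has nonnegative height. $\mathcal{B}$ denotes the set of all finite ballot words of pairwise distinct positive integers (including the empty word). A ballot permutation of $[n]$ is a permutation $\pi_1\cdots\pi_n$ in one-line notation that is a ballot word. For a word $w$, $w_1$ is its first letter, $w_{-1}$ its last letter, and $w'=w_k\cdots w_1$ its reversal. For a nonempty $\omega\in\mathcal{B}$, $X_n(\omega)$ is the set of ballot permutations $\pi$ of $[n]$ that can be written as a concatenation $\pi=\alpha\omega\gamma\delta$ (with $\alpha,\gamma,\delta$ possibly empty) such that $h(\alpha\omega\gamma)=h(\omega)$. For $\pi\in X_n(\omega)$, its $\omega$-decomposition is the (unique) 4-tuple $(\alpha,\omega,\gamma,\delta)$ with $\pi=\alpha\omega\gamma\delta$, $h(\alpha\omega\gamma)=h(\omega)$ and $\gamma'\omega_{-1}\in\mathcal{B}$, where $\gamma$ is of maximal length among all words with these properties. If $\gamma$ is empty, one sets $\gamma_{-1}=\omega_{-1}$. *)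

theory Defs
  imports Main
begin

definition height :: "nat list \<Rightarrow> int" where
  "height w = (\<Sum>t<length w - 1.
      (if w ! t < w ! (t+1) then 1 else 0) - (if w ! t > w ! (t+1) then 1 else 0))"

definition ballot :: "nat list \<Rightarrow> bool" where
  "ballot w \<longleftrightarrow> (\<forall>k\<le>length w. height (take k w) \<ge> 0)"

definition Bset :: "nat list set" where
  "Bset = {w. distinct w \<and> (\<forall>x\<in>set w. x > 0) \<and> ballot w}"

definition ballot_perm :: "nat \<Rightarrow> nat list \<Rightarrow> bool" where
  "ballot_perm n \<pi> \<longleftrightarrow> distinct \<pi> \<and> set \<pi> = {1..n} \<and> ballot \<pi>"

definition Xset :: "nat \<Rightarrow> nat list \<Rightarrow> nat list set" where
  "Xset n \<omega> = {\<pi>. ballot_perm n \<pi> \<and>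
      (\<exists>\<alpha> \<gamma> \<delta>. \<pi> = \<alpha> @ \<omega> @ \<gamma> @ \<delta> \<and> height (\<alpha> @ \<omega> @ \<gamma>) = height \<omega>)}"

definition decomp_cond :: "nat list \<Rightarrow> nat list \<Rightarrow> nat list \<Rightarrow> nat list \<Rightarrow> nat list \<Rightarrow> bool" where
  "decomp_cond \<pi> \<omega> \<alpha> \<gamma> \<delta> \<longleftrightarrow>
     \<pi> = \<alpha> @ \<omega> @ \<gamma> @ \<delta> \<and> height (\<alpha> @ \<omega> @ \<gamma>) = height \<omega> \<and>
     rev \<gamma> @ [last \<omega>] \<in> Bset"

definition omega_decomp :: "nat list \<Rightarrow> nat list \<Rightarrow> nat list \<Rightarrow> nat list \<Rightarrow> nat list \<Rightarrow> bool" where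
  "omega_decomp \<pi> \<omega> \<alpha> \<gamma> \<delta> \<longleftrightarrow>
     decomp_cond \<pi> \<omega> \<alpha> \<gamma> \<delta> \<and>
     (\<forall>\<alpha>' \<gamma>' \<delta>'. decomp_cond \<pi> \<omega> \<alpha>' \<gamma>' \<delta>' \<longrightarrow> length \<gamma>' \<le> length \<gamma>)"

text \<open>\<gamma>_{-1}, with the convention \<gamma>_{-1} = \<omega>_{-1} if \<gamma> is empty.\<close>
definition gamma_last :: "nat list \<Rightarrow> nat list \<Rightarrow> nat" where
  "gamma_last \<omega> \<gamma> = (if \<gamma> = [] then last \<omega> else last \<gamma>)"

end

theory Submission
  imports Defs
begin

text \<open>Let \<open>P = \<alpha>\<omega>\<gamma>\<close>. If \<delta> is not ballot, its shortest prefix \<open>d\<close> of negative height has height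
  exactly \<open>-1\<close> while all its suffixes have height \<open>\<le> 0\<close>, so \<open>rev d\<close> is ballot of height 1. Were
  \<open>last P < hd \<delta>\<close>, the ascent into \<open>d\<close> would compensate its height, and \<open>\<gamma>d\<close> would be an admissible
  longer choice of \<gamma>, contradicting maximality. Hence \<open>last P > hd \<delta>\<close>, and ballotness of \<open>\<pi>\<close> at
  the end of \<open>Pd\<close> gives \<open>0 \<le> h(\<omega>) - 1 - 1\<close>.\<close>

lemma height_Nil [simp]: "height [] = 0"
  by (simp add: height_def)

lemma height_singleton [simp]: "height [a] = 0"
  by (simp add: height_def)

lemma height_Cons_Cons [simp]:
  "height (a # b # w) = sgn (int b - int a) + height (b # w)"
proof -
  have "height (a # b # w) = (\<Sum>t<Suc (length w).
      (if (a#b#w) ! t < (a#b#w) ! (t+1) then 1 else 0) - (if (a#b#w) ! t > (a#b#w) ! (t+1) then 1 else 0))"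
    by (simp add: height_def)
  also have "\<dots> = sgn (int b - int a) + (\<Sum>t<length w.
      (if (b#w) ! t < (b#w) ! (t+1) then 1 else 0) - (if (b#w) ! t > (b#w) ! (t+1) then 1 else 0))"
    by (subst sum.lessThan_Suc_shift) (simp add: sgn_if)
  also have "\<dots> = sgn (int b - int a) + height (b # w)"
    by (simp add: height_def)
  finally show ?thesis .
qed

lemma height_append:
  assumes "u \<noteq> []" and "v \<noteq> []"
  shows "height (u @ v) = height u + sgn (int (hd v) - int (last u)) + height v"
  using assms
proof (induction u rule: induct_list012)
  case (2 a)
  then show ?case by (cases v) auto
next
  case (3 a b u)
  then show ?case by simp
qed simp

lemma height_rev: "height (rev w) = - height w"
proof (induction w rule: induct_list012)
  case (3 a b w)
  have "height (rev (a # b # w)) = height (rev (b # w) @ [a])"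
    by simp
  also have "\<dots> = height (rev (b # w)) + sgn (int a - int b)"
    by (subst height_append) auto
  finally show ?case
    using "3.IH"(2) by (simp add: sgn_if)
qed simp_all

lemma ballot_height_nonneg:
  "ballot w \<Longrightarrow> height w \<ge> 0"
  unfolding ballot_def by (metis order_refl take_all)

lemma ballot_append_left: "ballot (u @ v) \<Longrightarrow> ballot u"
  unfolding ballot_def by (metis le_add1 length_append order_trans take_append take_eq_Nil2 append_Nil2 diff_is_0_eq)

lemma ballot_append:
  assumes "ballot u" and "ballot v" and "u \<noteq> []" and "v \<noteq> []"
    and "height u + sgn (int (hd v) - int (last u)) \<ge> 0"
  shows "ballot (u @ v)"
  unfolding ballot_def
proof (intro allI impI)
  fix j assume j: "j \<le> length (u @ v)"
  show "height (take j (u @ v)) \<ge> 0"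
  proof (cases "j \<le> length u")
    case True
    then show ?thesis using \<open>ballot u\<close> by (simp add: ballot_def)
  next
    case False
    define v' where "v' = take (j - length u) v"
    have "v' \<noteq> []" and "hd v' = hd v"
      using False \<open>v \<noteq> []\<close> by (auto simp: v'_def hd_take)
    moreover have "height v' \<ge> 0"
      using \<open>ballot v\<close> j by (simp add: ballot_def v'_def)
    moreover have "take j (u @ v) = u @ v'"
      using False by (simp add: v'_def)
    ultimately show ?thesis
      using assms(3,5) by (simp add: height_append)
  qed
qed

lemma ballot_rev_if_suffixes_nonpos:
  assumes "\<forall>i\<le>length w. height (drop i w) \<le> 0"
  shows "ballot (rev w)"
  unfolding ballot_def
proof (intro allI impI)
  fix j assume "j \<le> length (rev w)"
  then have "take j (rev w) = rev (drop (length w - j) w)"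
    by (simp add: take_rev)
  then show "height (take j (rev w)) \<ge> 0"
    using assms by (simp add: height_rev)
qed

lemma not_ballot_shortest_negative_prefix:
  assumes "\<not> ballot w"
  obtains d e where "w = d @ e" and "height d = -1"
    and "\<forall>i<length d. height (take i d) \<ge> 0"
proof -
  obtain k0 where "k0 \<le> length w" and "height (take k0 w) < 0"
    using assms unfolding ballot_def by (auto simp: not_le)
  define k where "k = (LEAST k. height (take k w) < 0)"
  have k: "k \<le> length w" "height (take k w) < 0"
    using \<open>k0 \<le> length w\<close> Least_le[of "\<lambda>k. height (take k w) < 0" k0]
      LeastI[of "\<lambda>k. height (take k w) < 0" k0] \<open>height (take k0 w) < 0\<close>
    by (simp_all add: k_def)
  have below: "\<And>j. j < k \<Longrightarrow> height (take j w) \<ge> 0"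
    using not_less_Least by (fastforce simp: k_def)
  have "k \<ge> 2"
  proof (rule ccontr)
    assume "\<not> k \<ge> 2"
    then have "length (take k w) - 1 = 0" by simp
    then have "height (take k w) = 0" by (simp add: height_def)
    with k show False by simp
  qed
  then obtain m where "k = Suc m" and "m \<noteq> 0"
    by (cases k) auto
  then have "take k w = take m w @ [w ! m]" and "take m w \<noteq> []"
    using k(1) by (auto simp: take_Suc_conv_app_nth)
  then have "height (take k w) = height (take m w) + sgn (int (w ! m) - int (last (take m w)))"
    by (simp add: height_append)
  moreover have "height (take m w) \<ge> 0"
    using below \<open>k = Suc m\<close> by simp
  moreover have "sgn (int (w ! m) - int (last (take m w))) \<ge> -1"
    by (simp add: sgn_if)
  ultimately have "height (take k w) = -1"
    using k(2) by linarith
  moreover have "\<forall>i<length (take k w). height (take i (take k w)) \<ge> 0"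
    using below by simp
  ultimately show ?thesis
    by (intro that[of "take k w" "drop k w"]) simp_all
qed

lemma ballot_rev_shortest_negative_prefix:
  assumes "height d = -1" and "\<forall>i<length d. height (take i d) \<ge> 0"
  shows "ballot (rev d)"
proof (rule ballot_rev_if_suffixes_nonpos, intro allI impI)
  fix i assume "i \<le> length d"
  show "height (drop i d) \<le> 0"
  proof (cases "i = 0 \<or> i = length d")
    case True
    then show ?thesis using assms(1) by auto
  next
    case False
    then have "take i d \<noteq> []" and "drop i d \<noteq> []"
      using \<open>i \<le> length d\<close> by auto
    then have "height d = height (take i d) + sgn (int (hd (drop i d)) - int (last (take i d)))
        + height (drop i d)"
      by (metis append_take_drop_id height_append)
    moreover have "height (take i d) \<ge> 0"
      using assms(2) False \<open>i \<le> length d\<close> by simp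
    ultimately show ?thesis
      using assms(1) by (simp add: sgn_if split: if_splits)
  qed
qed

lemma decomp_cond_extend:
  assumes dc: "decomp_cond \<pi> \<omega> \<alpha> \<gamma> (d @ e)" and "\<omega> \<noteq> []"
    and "distinct \<pi>" and "\<forall>y\<in>set \<pi>. y > 0"
    and "height d = -1" and "ballot (rev d)" and ascent: "last (\<alpha> @ \<omega> @ \<gamma>) < hd d"
  shows "decomp_cond \<pi> \<omega> \<alpha> (\<gamma> @ d) e"
  unfolding decomp_cond_def
proof (intro conjI)
  define P where "P = \<alpha> @ \<omega> @ \<gamma>"
  define R where "R = rev \<gamma> @ [last \<omega>]"
  have \<pi>: "\<pi> = P @ d @ e" and hP: "height P = height \<omega>" and "R \<in> Bset"
    using dc by (simp_all add: decomp_cond_def P_def R_def)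
  have "d \<noteq> []" and "P \<noteq> []"
    using \<open>height d = -1\<close> \<open>\<omega> \<noteq> []\<close> by (auto simp: P_def)
  have up: "sgn (int (hd d) - int (last P)) = 1" and down: "sgn (int (last P) - int (hd d)) = -1"
    using ascent by (simp_all add: P_def)
  show "\<pi> = \<alpha> @ \<omega> @ (\<gamma> @ d) @ e"
    using \<pi> by (simp add: P_def)
  show "height (\<alpha> @ \<omega> @ \<gamma> @ d) = height \<omega>"
    using height_append[OF \<open>P \<noteq> []\<close> \<open>d \<noteq> []\<close>] hP up \<open>height d = -1\<close> by (simp add: P_def)
  have "hd R = last P"
    using \<open>\<omega> \<noteq> []\<close> by (cases "\<gamma> = []") (auto simp: R_def P_def hd_rev)
  then have "ballot (rev d @ R)"
    using \<open>R \<in> Bset\<close> \<open>d \<noteq> []\<close> \<open>ballot (rev d)\<close> down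
    by (intro ballot_append) (auto simp: Bset_def R_def height_rev last_rev \<open>height d = -1\<close>)
  moreover have "set R \<subseteq> set P"
    using \<open>\<omega> \<noteq> []\<close> by (auto simp: R_def P_def)
  ultimately have "rev d @ R \<in> Bset"
    using \<open>R \<in> Bset\<close> \<pi> assms(3,4) by (auto simp: Bset_def)
  then show "rev (\<gamma> @ d) @ [last \<omega>] \<in> Bset"
    by (simp add: R_def)
qed

theorem lemma2p2:
  fixes \<omega> \<pi> \<alpha> \<gamma> \<delta> :: "nat list" and n :: nat
  assumes "\<omega> \<noteq> []" and "\<omega> \<in> Bset" and "n \<ge> 1"
    and "\<pi> \<in> Xset n \<omega>"
    and "omega_decomp \<pi> \<omega> \<alpha> \<gamma> \<delta>"
    and "\<delta> \<notin> Bset"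
  shows "gamma_last \<omega> \<gamma> > hd \<delta> \<and> height \<omega> \<noteq> 1"
proof -
  define P where "P = \<alpha> @ \<omega> @ \<gamma>"
  have dc: "decomp_cond \<pi> \<omega> \<alpha> \<gamma> \<delta>"
    and maximal: "\<And>\<alpha>' \<gamma>' \<delta>'. decomp_cond \<pi> \<omega> \<alpha>' \<gamma>' \<delta>' \<Longrightarrow> length \<gamma>' \<le> length \<gamma>"
    using assms(5) by (auto simp: omega_decomp_def)
  have \<pi>: "\<pi> = P @ \<delta>" and hP: "height P = height \<omega>"
    using dc by (simp_all add: decomp_cond_def P_def)
  have "distinct \<pi>" and pos: "\<forall>y\<in>set \<pi>. y > 0" and "ballot \<pi>"
    using assms(4) by (auto simp: Xset_def ballot_perm_def)
  then have "\<not> ballot \<delta>"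
    using assms(6) \<pi> by (auto simp: Bset_def)
  then obtain d e where \<delta>: "\<delta> = d @ e" and hd: "height d = -1"
    and prefixes: "\<forall>i<length d. height (take i d) \<ge> 0"
    by (rule not_ballot_shortest_negative_prefix)
  have "d \<noteq> []" and "P \<noteq> []"
    using hd \<open>\<omega> \<noteq> []\<close> by (auto simp: P_def)
  then have "hd \<delta> = hd d"
    by (simp add: \<delta>)
  have "\<not> last P < hd d"
  proof
    assume "last P < hd d"
    then have "decomp_cond \<pi> \<omega> \<alpha> (\<gamma> @ d) e"
      using decomp_cond_extend[OF dc[unfolded \<delta>] \<open>\<omega> \<noteq> []\<close> \<open>distinct \<pi>\<close> pos hd
          ballot_rev_shortest_negative_prefix[OF hd prefixes]]
      by (simp add: P_def)
    from maximal[OF this] \<open>d \<noteq> []\<close> show False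
      by simp
  qed
  moreover have "last P \<noteq> hd d"
  proof
    assume "last P = hd d"
    then have "hd d \<in> set P \<inter> set d"
      using \<open>d \<noteq> []\<close> \<open>P \<noteq> []\<close> by (metis IntI hd_in_set last_in_set)
    with \<open>distinct \<pi>\<close> show False
      by (auto simp: \<pi> \<delta>)
  qed
  ultimately have descent: "hd d < last P" by simp
  have "height (P @ d) \<ge> 0"
    using \<open>ballot \<pi>\<close> ballot_append_left[of "P @ d" e] ballot_height_nonneg by (simp add: \<pi> \<delta>)
  then have "height \<omega> \<ge> 2"
    using height_append[OF \<open>P \<noteq> []\<close> \<open>d \<noteq> []\<close>] hP hd descent by simp
  moreover have "gamma_last \<omega> \<gamma> = last P"
    using \<open>\<omega> \<noteq> []\<close> by (simp add: gamma_last_def P_def)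
  ultimately show ?thesis
    using descent \<open>hd \<delta> = hd d\<close> by simp
qed

end
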